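(* Let $a\in\mathbb F^*$, let $g,h\in\mathcal R$ satisfy $x^n-a=hg$, and let $f\in\mathcal R$. Then $$M^\theta_a(\overline{fg})=M^\theta_c(\overline f)\,M^\theta_a(\overline g),\qquad\text{where } c=\gamma(a,g).$$
   Context: $\mathbb F$ is a finite field, $\theta\in\mathrm{Aut}(\mathbb F)$, and $\mathcal R=\mathbb F[x;\theta]$ is the skew polynomial ring: elements $\sum_i f_ix^i$ with $f_i\in\mathbb F$ on the left, usual addition, multiplication determined by $xb=\theta(b)x$ for $b\in\mathbb F$. Fix $n\in\mathbb N$. For $b\in\mathbb F^*$, $\mathcal S_b=\mathcal R/\mathcal R(x^n-b)$ (a left $\mathcal R$-module); $\overline f$ denotes the coset of $f$, and in $M^\theta_b(\overline f)$ the coset is taken in $\mathcal S_b$. Let $\mathfrak v_b:\mathcal S_b\to\mathbb F^n$ be the inverse of the isomorphism $(c_0,\dots,c_{n-1})\mapsto\overline{\sum_{i=0}^{n-1}c_ix^i}$. The $(\theta,b)$-circulant $M^\theta_b(\overline f)$ is the $n\times n$ matrix whose row with index $i$ ($i=0,\dots,n-1$) is $\mathfrak v_b(\overline{x^if})$. For a right divisor $g=\sum g_ix^i$ of $x^n-a$ (so $g_0\ne0$), $\gamma(a,g)=a\,g_0^{-1}\theta^n(g_0)$. *)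

theory Defs
  imports "HOL-Computational_Algebra.Polynomial" "Jordan_Normal_Form.Matrix"
begin

text \<open>Skew polynomials over a field are represented by their (left) coefficients,
  i.e. by elements of type 'a poly; only addition of 'a poly is used, the
  multiplication of the skew polynomial ring is skew_mult below.\<close>

definition field_aut :: "('a::field \<Rightarrow> 'a) \<Rightarrow> bool" where
  "field_aut \<theta> \<longleftrightarrow> bij \<theta> \<and> (\<forall>x y. \<theta> (x + y) = \<theta> x + \<theta> y \<and> \<theta> (x * y) = \<theta> x * \<theta> y)"

definition skew_mult :: "('a::field \<Rightarrow> 'a) \<Rightarrow> 'a poly \<Rightarrow> 'a poly \<Rightarrow> 'a poly" where
  "skew_mult \<theta> f g =
     (\<Sum>i\<le>degree f. \<Sum>j\<le>degree g. monom (coeff f i * (\<theta> ^^ i) (coeff g j)) (i + j))"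

definition xn_minus :: "nat \<Rightarrow> 'a::field \<Rightarrow> 'a poly" where
  "xn_minus n b = monom 1 n - [:b:]"

text \<open>Congruence modulo the left ideal R (x^n - b), i.e. equality of cosets in S_b.\<close>
definition skew_cong :: "('a::field \<Rightarrow> 'a) \<Rightarrow> nat \<Rightarrow> 'a \<Rightarrow> 'a poly \<Rightarrow> 'a poly \<Rightarrow> bool" where
  "skew_cong \<theta> n b f g \<longleftrightarrow> (\<exists>q. f - g = skew_mult \<theta> q (xn_minus n b))"

definition vb :: "('a::field \<Rightarrow> 'a) \<Rightarrow> nat \<Rightarrow> 'a \<Rightarrow> 'a poly \<Rightarrow> 'a vec" where
  "vb \<theta> n b f = (THE c. c \<in> carrier_vec n \<and>
      skew_cong \<theta> n b f (\<Sum>i<n. monom (c $ i) i))"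

definition skew_circulant :: "('a::field \<Rightarrow> 'a) \<Rightarrow> nat \<Rightarrow> 'a \<Rightarrow> 'a poly \<Rightarrow> 'a mat" where
  "skew_circulant \<theta> n b f =
     mat n n (\<lambda>(i, j). vb \<theta> n b (skew_mult \<theta> (monom 1 i) f) $ j)"

definition skew_gamma :: "('a::field \<Rightarrow> 'a) \<Rightarrow> nat \<Rightarrow> 'a \<Rightarrow> 'a poly \<Rightarrow> 'a" where
  "skew_gamma \<theta> n a g = a * inverse (coeff g 0) * (\<theta> ^^ n) (coeff g 0)"

end

theory Submission
  imports Defs
begin

text \<open>
  With c = gamma(a,g) one has (x^n - c) g = theta^n(g) (x^n - a) in F[x;theta]: writing
  x^n - a = h g, the difference of the two sides is a left multiple e g of g, it has degree at
  most deg g, and the choice of c makes its constant term vanish; since g_0 is nonzero this forces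
  e = 0. Hence right multiplication by g maps R(x^n - c) into R(x^n - a), i.e. induces a map
  S_c -> S_a. Row i of the left-hand side is v_a(x^i f g); replacing x^i f by its reduction
  sum_k r_k x^k modulo x^n - c, where r is row i of M_c(f), and expanding by linearity gives
  v_a(x^i f g) = sum_k r_k v_a(x^k g), which is row i of M_c(f) M_a(g).
\<close>

lemma coeff_xn_minus: "coeff (xn_minus n b) k = (if k = n then 1 else 0) - (if k = 0 then b else 0)"
  by (auto simp: xn_minus_def coeff_monom coeff_pCons split: nat.split)

lemma degree_xn_minus: "0 < n \<Longrightarrow> degree (xn_minus n b) = n"
  by (intro antisym degree_le le_degree) (simp_all add: coeff_xn_minus)

lemma xn_minus_nonzero: "0 < n \<Longrightarrow> xn_minus n b \<noteq> 0"
  using degree_xn_minus[of n b] by auto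

definition poly_of_vec :: "'a::comm_monoid_add vec \<Rightarrow> 'a poly" where
  "poly_of_vec c = (\<Sum>i<dim_vec c. monom (c $ i) i)"

lemma coeff_poly_of_vec: "coeff (poly_of_vec c) k = (if k < dim_vec c then c $ k else 0)"
  by (simp add: poly_of_vec_def coeff_sum coeff_monom)

lemma degree_poly_of_vec_less: "0 < dim_vec c \<Longrightarrow> degree (poly_of_vec c) < dim_vec c"
  by (rule degree_lessI) (simp_all add: coeff_poly_of_vec)

lemma poly_of_vec_inject:
  assumes "dim_vec c = dim_vec d" "poly_of_vec c = poly_of_vec d"
  shows "c = d"
proof (rule eq_vecI)
  fix i assume "i < dim_vec d"
  moreover have "coeff (poly_of_vec c) i = coeff (poly_of_vec d) i"
    using assms(2) by simp
  ultimately show "c $ i = d $ i"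
    using assms(1) by (simp add: coeff_poly_of_vec)
qed (use assms in simp)

lemma poly_of_vec_coeff: "degree p < n \<Longrightarrow> poly_of_vec (vec n (coeff p)) = p"
  by (rule poly_eqI) (simp add: coeff_poly_of_vec coeff_eq_0)

lemma field_hom_if_field_aut:
  assumes "field_aut \<theta>"
  shows "field_hom \<theta>"
proof -
  have add: "\<theta> (x + y) = \<theta> x + \<theta> y" and mult: "\<theta> (x * y) = \<theta> x * \<theta> y" for x y
    using assms unfolding field_aut_def by auto
  obtain u where "\<theta> u = 1"
    using assms unfolding field_aut_def by (metis bij_pointE)
  then have "\<theta> 1 = 1" using mult[of 1 u] by simp
  moreover have "\<theta> 0 = 0" using add[of 0 0] by (metis add.right_neutral add_left_imp_eq)
  ultimately show ?thesis by unfold_locales (simp_all add: add mult)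
qed

lemma field_hom_funpow:
  fixes \<phi> :: "'a::field \<Rightarrow> 'a"
  assumes "field_hom \<phi>"
  shows "field_hom (\<phi> ^^ i)"
proof (induction i)
  case 0
  show ?case by unfold_locales simp_all
next
  case (Suc i)
  interpret \<phi>: field_hom \<phi> by (rule assms)
  interpret \<phi>i: field_hom "\<phi> ^^ i" by (rule Suc.IH)
  show ?case by unfold_locales (simp_all add: \<phi>.hom_add \<phi>.hom_mult \<phi>i.hom_add \<phi>i.hom_mult)
qed

locale skew_polynomial_ring =
  fixes \<theta> :: "'a::field \<Rightarrow> 'a"
  assumes field_hom: "field_hom \<theta>"
begin

lemma funpow_field_hom_simps [simp]:
  "(\<theta> ^^ i) 0 = 0" "(\<theta> ^^ i) 1 = 1"
  "(\<theta> ^^ i) (x * y) = (\<theta> ^^ i) x * (\<theta> ^^ i) y"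
  "(\<theta> ^^ i) (x + y) = (\<theta> ^^ i) x + (\<theta> ^^ i) y"
  "(\<theta> ^^ i) (x - y) = (\<theta> ^^ i) x - (\<theta> ^^ i) y"
  "(\<theta> ^^ i) x = 0 \<longleftrightarrow> x = 0"
proof -
  interpret field_hom "\<theta> ^^ i" by (rule field_hom_funpow[OF field_hom])
  show "(\<theta> ^^ i) 0 = 0" "(\<theta> ^^ i) 1 = 1" "(\<theta> ^^ i) x = 0 \<longleftrightarrow> x = 0" by simp_all
  show "(\<theta> ^^ i) (x * y) = (\<theta> ^^ i) x * (\<theta> ^^ i) y"
    "(\<theta> ^^ i) (x + y) = (\<theta> ^^ i) x + (\<theta> ^^ i) y"
    "(\<theta> ^^ i) (x - y) = (\<theta> ^^ i) x - (\<theta> ^^ i) y"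
    by (simp_all add: hom_distribs)
qed

abbreviation twist :: "nat \<Rightarrow> 'a poly \<Rightarrow> 'a poly" where
  "twist i p \<equiv> map_poly (\<theta> ^^ i) p"

lemma coeff_twist [simp]: "coeff (twist i p) k = (\<theta> ^^ i) (coeff p k)"
  by (simp add: coeff_map_poly)

lemma degree_twist [simp]: "degree (twist i p) = degree p"
  by (simp add: degree_map_poly)

lemma twist_add: "twist i (p + q) = twist i p + twist i q"
  by (rule poly_eqI) simp

lemma twist_diff: "twist i (p - q) = twist i p - twist i q"
  by (rule poly_eqI) simp

lemma twist_monom: "twist i (monom c k) = monom ((\<theta> ^^ i) c) k"
  by (simp add: map_poly_monom)

lemma twist_monom_mult: "twist i (monom c k * p) = monom ((\<theta> ^^ i) c) k * twist i p"
  by (rule poly_eqI) (simp add: coeff_monom_mult)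

lemma twist_twist: "twist i (twist j p) = twist (i + j) p"
  by (simp add: map_poly_map_poly funpow_add)

lemma skew_mult_eq_sum: "skew_mult \<theta> f g = (\<Sum>i\<le>degree f. monom (coeff f i) i * twist i g)"
proof -
  have "(\<Sum>j\<le>degree g. monom (coeff f i * (\<theta> ^^ i) (coeff g j)) (i + j))
      = monom (coeff f i) i * twist i g" for i
  proof -
    have "(\<Sum>j\<le>degree g. monom (coeff f i * (\<theta> ^^ i) (coeff g j)) (i + j))
        = monom (coeff f i) i * (\<Sum>j\<le>degree (twist i g). monom (coeff (twist i g) j) j)"
      by (simp add: sum_distrib_left mult_monom)
    then show ?thesis by (simp only: poly_as_sum_of_monoms)
  qed
  then show ?thesis unfolding skew_mult_def by simp
qed

lemma skew_mult_eq_sum_le: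
  assumes "degree f \<le> N"
  shows "skew_mult \<theta> f g = (\<Sum>i\<le>N. monom (coeff f i) i * twist i g)"
  unfolding skew_mult_eq_sum
  by (rule sum.mono_neutral_left) (use assms in \<open>auto simp: coeff_eq_0\<close>)

lemma skew_mult_0_left [simp]: "skew_mult \<theta> 0 g = 0"
  by (simp add: skew_mult_eq_sum)

lemma skew_mult_0_right [simp]: "skew_mult \<theta> f 0 = 0"
  by (simp add: skew_mult_eq_sum)

lemma skew_mult_add_left: "skew_mult \<theta> (f + f') g = skew_mult \<theta> f g + skew_mult \<theta> f' g"
proof -
  define N where "N = max (degree f) (degree f')"
  have "degree (f + f') \<le> N" unfolding N_def by (rule degree_add_le_max)
  then show ?thesis
    using skew_mult_eq_sum_le[of f N g] skew_mult_eq_sum_le[of f' N g]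
      skew_mult_eq_sum_le[of "f + f'" N g]
    by (simp add: N_def add_monom[symmetric] distrib_right sum.distrib)
qed

lemma skew_mult_diff_left: "skew_mult \<theta> (f - f') g = skew_mult \<theta> f g - skew_mult \<theta> f' g"
proof -
  define N where "N = max (degree f) (degree f')"
  have "degree (f - f') \<le> N" unfolding N_def by (rule degree_diff_le_max)
  then show ?thesis
    using skew_mult_eq_sum_le[of f N g] skew_mult_eq_sum_le[of f' N g]
      skew_mult_eq_sum_le[of "f - f'" N g]
    by (simp add: N_def diff_monom[symmetric] left_diff_distrib sum_subtractf)
qed

lemma skew_mult_add_right: "skew_mult \<theta> f (g + g') = skew_mult \<theta> f g + skew_mult \<theta> f g'"
  by (simp add: skew_mult_eq_sum twist_add distrib_left sum.distrib)

lemma skew_mult_diff_right: "skew_mult \<theta> f (g - g') = skew_mult \<theta> f g - skew_mult \<theta> f g'"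
  by (simp add: skew_mult_eq_sum twist_diff right_diff_distrib sum_subtractf)

lemma skew_mult_sum_left: "skew_mult \<theta> (\<Sum>i\<in>A. f i) g = (\<Sum>i\<in>A. skew_mult \<theta> (f i) g)"
  by (induction A rule: infinite_finite_induct) (simp_all add: skew_mult_add_left)

lemma skew_mult_sum_right: "skew_mult \<theta> f (\<Sum>i\<in>A. g i) = (\<Sum>i\<in>A. skew_mult \<theta> f (g i))"
  by (induction A rule: infinite_finite_induct) (simp_all add: skew_mult_add_right)

lemma skew_mult_monom_left: "skew_mult \<theta> (monom c k) g = monom c k * twist k g"
proof -
  have "skew_mult \<theta> (monom c k) g = (\<Sum>i\<le>k. monom (coeff (monom c k) i) i * twist i g)"
    by (rule skew_mult_eq_sum_le) (simp add: degree_monom_le)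
  also have "\<dots> = (\<Sum>i\<le>k. if i = k then monom c k * twist k g else 0)"
    by (rule sum.cong) (simp_all add: coeff_monom)
  finally show ?thesis by simp
qed

lemma skew_mult_const_left: "skew_mult \<theta> [:c:] g = Polynomial.smult c g"
  using skew_mult_monom_left[of c 0 g] by (simp add: monom_0)

lemma skew_mult_monom_1_right: "skew_mult \<theta> f (monom 1 n) = f * monom 1 n"
proof -
  have "skew_mult \<theta> f (monom 1 n) = (\<Sum>i\<le>degree f. monom (coeff f i) i) * monom 1 n"
    by (simp add: skew_mult_eq_sum twist_monom sum_distrib_right)
  then show ?thesis by (simp only: poly_as_sum_of_monoms)
qed

lemma skew_mult_assoc: "skew_mult \<theta> (skew_mult \<theta> f g) h = skew_mult \<theta> f (skew_mult \<theta> g h)"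
proof -
  have monom_assoc: "skew_mult \<theta> (skew_mult \<theta> (monom c i) (monom d j)) h
      = skew_mult \<theta> (monom c i) (skew_mult \<theta> (monom d j) h)" for c d i j
    by (simp add: skew_mult_monom_left twist_monom twist_monom_mult twist_twist mult_monom
        mult.assoc[symmetric] add.commute)
  have "skew_mult \<theta> (skew_mult \<theta> f g) h
      = skew_mult \<theta> (skew_mult \<theta> (\<Sum>i\<le>degree f. monom (coeff f i) i)
          (\<Sum>j\<le>degree g. monom (coeff g j) j)) h"
    by (simp only: poly_as_sum_of_monoms)
  also have "\<dots> = skew_mult \<theta> (\<Sum>i\<le>degree f. monom (coeff f i) i)
      (skew_mult \<theta> (\<Sum>j\<le>degree g. monom (coeff g j) j) h)"
    by (simp only: skew_mult_sum_left skew_mult_sum_right monom_assoc)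
  also have "\<dots> = skew_mult \<theta> f (skew_mult \<theta> g h)"
    by (simp only: poly_as_sum_of_monoms)
  finally show ?thesis .
qed

lemma skew_mult_smult_left:
  "skew_mult \<theta> (Polynomial.smult c f) g = Polynomial.smult c (skew_mult \<theta> f g)"
  by (simp flip: skew_mult_const_left add: skew_mult_assoc)

lemma coeff_skew_mult_0: "coeff (skew_mult \<theta> f g) 0 = coeff f 0 * coeff g 0"
  unfolding skew_mult_eq_sum coeff_sum
  by (subst sum.remove[of _ 0]) (auto simp: coeff_monom_mult intro!: sum.neutral)

lemma degree_skew_mult_le: "degree (skew_mult \<theta> f g) \<le> degree f + degree g"
  unfolding skew_mult_eq_sum
proof (rule degree_sum_le)
  fix i assume "i \<in> {..degree f}"
  moreover have "degree (monom (coeff f i) i * twist i g) \<le> degree (monom (coeff f i) i) + degree g"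
    by (metis degree_mult_le degree_twist)
  ultimately show "degree (monom (coeff f i) i * twist i g) \<le> degree f + degree g"
    using degree_monom_le[of "coeff f i" i] by simp
qed simp

lemma coeff_skew_mult_degree:
  "coeff (skew_mult \<theta> f g) (degree f + degree g) = lead_coeff f * (\<theta> ^^ degree f) (lead_coeff g)"
proof -
  have "(\<Sum>i\<in>{..degree f} - {degree f}. coeff (monom (coeff f i) i * twist i g) (degree f + degree g)) = 0"
    by (rule sum.neutral) (auto simp: coeff_monom_mult coeff_eq_0)
  then show ?thesis
    unfolding skew_mult_eq_sum coeff_sum
    by (subst sum.remove[of _ "degree f"]) (simp_all add: coeff_monom_mult)
qed

lemma degree_skew_mult:
  assumes "f \<noteq> 0" "g \<noteq> 0"
  shows "degree (skew_mult \<theta> f g) = degree f + degree g"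
  using assms degree_skew_mult_le[of f g] coeff_skew_mult_degree[of f g]
  by (intro antisym le_degree) simp_all

lemma skew_cong_refl: "skew_cong \<theta> n b p p"
  unfolding skew_cong_def by (rule exI[of _ 0]) simp

lemma skew_cong_sym: "skew_cong \<theta> n b p q \<Longrightarrow> skew_cong \<theta> n b q p"
  unfolding skew_cong_def by (metis minus_diff_eq diff_0 skew_mult_diff_left skew_mult_0_left)

lemma skew_cong_trans: "skew_cong \<theta> n b p q \<Longrightarrow> skew_cong \<theta> n b q r \<Longrightarrow> skew_cong \<theta> n b p r"
  unfolding skew_cong_def by (metis diff_add_cancel add_diff_eq skew_mult_add_left)

lemma skew_cong_add:
  "skew_cong \<theta> n b p q \<Longrightarrow> skew_cong \<theta> n b p' q' \<Longrightarrow> skew_cong \<theta> n b (p + p') (q + q')"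
  unfolding skew_cong_def by (metis add_diff_add skew_mult_add_left)

lemma skew_cong_smult:
  "skew_cong \<theta> n b p q \<Longrightarrow> skew_cong \<theta> n b (Polynomial.smult c p) (Polynomial.smult c q)"
  unfolding skew_cong_def by (metis smult_diff_right skew_mult_smult_left)

lemma skew_cong_sum:
  "(\<And>i. i \<in> A \<Longrightarrow> skew_cong \<theta> n b (p i) (q i)) \<Longrightarrow>
   skew_cong \<theta> n b (\<Sum>i\<in>A. p i) (\<Sum>i\<in>A. q i)"
  by (induction A rule: infinite_finite_induct) (simp_all add: skew_cong_refl skew_cong_add)

lemma skew_cong_skew_mult_right:
  assumes "skew_mult \<theta> (xn_minus n c) g = skew_mult \<theta> k (xn_minus n a)"
    and "skew_cong \<theta> n c p q"
  shows "skew_cong \<theta> n a (skew_mult \<theta> p g) (skew_mult \<theta> q g)"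
proof -
  obtain r where "p - q = skew_mult \<theta> r (xn_minus n c)"
    using assms(2) unfolding skew_cong_def by blast
  then have "skew_mult \<theta> p g - skew_mult \<theta> q g = skew_mult \<theta> (skew_mult \<theta> r k) (xn_minus n a)"
    by (simp add: skew_mult_diff_left[symmetric] skew_mult_assoc assms(1))
  then show ?thesis unfolding skew_cong_def by blast
qed

lemma skew_remainder_exists:
  assumes "0 < n"
  shows "\<exists>q. degree (p - skew_mult \<theta> q (xn_minus n b)) < n"
proof (induction "degree p" arbitrary: p rule: less_induct)
  case less
  show ?case
  proof (cases "degree p < n")
    case True
    then show ?thesis by (intro exI[of _ 0]) simp
  next
    case False
    define q where "q = monom (lead_coeff p) (degree p - n)"
    define p' where "p' = p - skew_mult \<theta> q (xn_minus n b)"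
    have "p \<noteq> 0" using False assms by auto
    then have "q \<noteq> 0" and deg_q: "degree q + n = degree p"
      using False by (simp_all add: q_def degree_monom_eq)
    have X: "degree (xn_minus n b) = n" "lead_coeff (xn_minus n b) = 1"
      using assms by (simp_all add: degree_xn_minus coeff_xn_minus)
    have "degree (skew_mult \<theta> q (xn_minus n b)) = degree p"
      using degree_skew_mult[OF \<open>q \<noteq> 0\<close> xn_minus_nonzero[OF assms]] X deg_q by simp
    moreover have "coeff (skew_mult \<theta> q (xn_minus n b)) (degree p) = lead_coeff p"
      using coeff_skew_mult_degree[of q "xn_minus n b"] X deg_q \<open>p \<noteq> 0\<close>
      by (simp add: q_def degree_monom_eq)
    ultimately have "degree p' \<le> degree p" "coeff p' (degree p) = 0"
      unfolding p'_def by (simp_all add: degree_diff_le)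
    then have "degree p' < degree p"
      using False assms by (cases "p' = 0") (simp_all add: degree_less_if_less_eqI)
    then obtain q' where "degree (p' - skew_mult \<theta> q' (xn_minus n b)) < n"
      using less by blast
    moreover have "p - skew_mult \<theta> (q + q') (xn_minus n b) = p' - skew_mult \<theta> q' (xn_minus n b)"
      unfolding p'_def by (simp add: skew_mult_add_left)
    ultimately show ?thesis by (intro exI[of _ "q + q'"]) simp
  qed
qed

lemma poly_of_vec_eq_if_skew_cong:
  assumes "0 < n" "c \<in> carrier_vec n" "d \<in> carrier_vec n"
    and "skew_cong \<theta> n b (poly_of_vec c) (poly_of_vec d)"
  shows "c = d"
proof -
  obtain q where q: "poly_of_vec c - poly_of_vec d = skew_mult \<theta> q (xn_minus n b)"
    using assms(4) unfolding skew_cong_def by blast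
  have "dim_vec c = n" "dim_vec d = n" using assms(2,3) by auto
  then have "degree (poly_of_vec c - poly_of_vec d) < n"
    using assms(1) by (metis degree_diff_less degree_poly_of_vec_less)
  then have "q = 0"
    using q degree_skew_mult[of q "xn_minus n b"] assms(1)
    by (auto simp: xn_minus_nonzero degree_xn_minus)
  then show ?thesis using q assms(2,3) by (intro poly_of_vec_inject) simp_all
qed

lemma vb_unique:
  assumes "0 < n"
  shows "\<exists>!c. c \<in> carrier_vec n \<and> skew_cong \<theta> n b p (poly_of_vec c)"
proof (rule ex_ex1I)
  obtain q where q: "degree (p - skew_mult \<theta> q (xn_minus n b)) < n"
    using skew_remainder_exists[OF assms] by blast
  show "\<exists>c. c \<in> carrier_vec n \<and> skew_cong \<theta> n b p (poly_of_vec c)"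
    using q by (intro exI[of _ "vec n (coeff (p - skew_mult \<theta> q (xn_minus n b)))"])
      (auto simp: poly_of_vec_coeff skew_cong_def)
next
  fix c d
  assume c: "c \<in> carrier_vec n \<and> skew_cong \<theta> n b p (poly_of_vec c)"
    and d: "d \<in> carrier_vec n \<and> skew_cong \<theta> n b p (poly_of_vec d)"
  then have "skew_cong \<theta> n b (poly_of_vec c) (poly_of_vec d)"
    by (meson skew_cong_sym skew_cong_trans)
  then show "c = d"
    using assms c d by (intro poly_of_vec_eq_if_skew_cong) simp_all
qed

lemma vb_eq_The:
  "vb \<theta> n b p = (THE c. c \<in> carrier_vec n \<and> skew_cong \<theta> n b p (poly_of_vec c))"
  unfolding vb_def poly_of_vec_def by (intro arg_cong[where f = The] ext) auto

lemma vb_carrier_skew_cong: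
  assumes "0 < n"
  shows "vb \<theta> n b p \<in> carrier_vec n" "skew_cong \<theta> n b p (poly_of_vec (vb \<theta> n b p))"
  using theI'[OF vb_unique[OF assms, of b p]] unfolding vb_eq_The by blast+

lemma dim_vb: "0 < n \<Longrightarrow> dim_vec (vb \<theta> n b p) = n"
  by (rule carrier_vecD[OF vb_carrier_skew_cong(1)])

lemma vb_eqI:
  assumes "0 < n" "c \<in> carrier_vec n" "skew_cong \<theta> n b p (poly_of_vec c)"
  shows "vb \<theta> n b p = c"
  unfolding vb_eq_The using vb_unique[OF assms(1)] assms(2,3) by (intro the1_equality) blast+

lemma vb_skew_cong:
  assumes "0 < n" "skew_cong \<theta> n b p q"
  shows "vb \<theta> n b p = vb \<theta> n b q"
  using assms skew_cong_trans[OF assms(2) vb_carrier_skew_cong(2)[OF assms(1), of b q]]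
  by (intro vb_eqI vb_carrier_skew_cong)

lemma row_skew_circulant:
  assumes "0 < n" "i < n"
  shows "row (skew_circulant \<theta> n b f) i = vb \<theta> n b (skew_mult \<theta> (monom 1 i) f)"
  using assms by (intro eq_vecI) (simp_all add: skew_circulant_def dim_vb)

lemma vb_skew_mult_poly_of_vec:
  assumes "0 < n" "r \<in> carrier_vec n"
  shows "vb \<theta> n a (skew_mult \<theta> (poly_of_vec r) g) = vec n (\<lambda>j. r \<bullet> col (skew_circulant \<theta> n a g) j)"
proof (rule vb_eqI[OF assms(1)])
  define s where "s k = vb \<theta> n a (skew_mult \<theta> (monom 1 k) g)" for k
  have expand: "skew_mult \<theta> (poly_of_vec r) g
      = (\<Sum>k<n. Polynomial.smult (r $ k) (skew_mult \<theta> (monom 1 k) g))"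
    using assms(2) by (simp add: poly_of_vec_def skew_mult_sum_left smult_monom flip: skew_mult_smult_left)
  have reduce: "skew_cong \<theta> n a (\<Sum>k<n. Polynomial.smult (r $ k) (skew_mult \<theta> (monom 1 k) g))
      (\<Sum>k<n. Polynomial.smult (r $ k) (poly_of_vec (s k)))"
    by (intro skew_cong_sum skew_cong_smult) (simp add: s_def vb_carrier_skew_cong assms(1))
  have collect: "(\<Sum>k<n. Polynomial.smult (r $ k) (poly_of_vec (s k)))
      = poly_of_vec (vec n (\<lambda>j. r \<bullet> col (skew_circulant \<theta> n a g) j))"
  proof (rule poly_eqI)
    fix j
    show "coeff (\<Sum>k<n. Polynomial.smult (r $ k) (poly_of_vec (s k))) j
        = coeff (poly_of_vec (vec n (\<lambda>j. r \<bullet> col (skew_circulant \<theta> n a g) j))) j"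
      using assms(1) by (simp add: coeff_sum coeff_poly_of_vec scalar_prod_def
          skew_circulant_def s_def dim_vb lessThan_atLeast0)
  qed
  show "skew_cong \<theta> n a (skew_mult \<theta> (poly_of_vec r) g)
      (poly_of_vec (vec n (\<lambda>j. r \<bullet> col (skew_circulant \<theta> n a g) j)))"
    using reduce unfolding expand collect .
qed simp

lemma skew_mult_xn_minus_gamma:
  assumes "0 < n" "a \<noteq> 0" "xn_minus n a = skew_mult \<theta> h g"
  shows "skew_mult \<theta> (xn_minus n (skew_gamma \<theta> n a g)) g = skew_mult \<theta> (twist n g) (xn_minus n a)"
proof -
  define c where "c = skew_gamma \<theta> n a g"
  have "coeff h 0 * coeff g 0 = - a"
    using coeff_skew_mult_0[of h g] assms(1) by (simp add: coeff_xn_minus flip: assms(3))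
  then have g0: "coeff g 0 \<noteq> 0" and "g \<noteq> 0" using assms(2) by auto
  define d where "d = skew_mult \<theta> (xn_minus n c) g - skew_mult \<theta> (twist n g) (xn_minus n a)"
  have d_eq: "d = skew_mult \<theta> (twist n g) [:a:] - Polynomial.smult c g"
    unfolding d_def xn_minus_def
    by (simp add: skew_mult_diff_left skew_mult_diff_right skew_mult_monom_left
        skew_mult_monom_1_right skew_mult_const_left mult.commute)
  have "degree d \<le> degree g"
    using degree_skew_mult_le[of "twist n g" "[:a:]"] unfolding d_eq
    by (intro degree_diff_le) (simp_all add: degree_smult_le)
  have "coeff d 0 = 0"
    using g0 by (simp add: d_eq coeff_skew_mult_0 c_def skew_gamma_def)
  define e where "e = xn_minus n c - skew_mult \<theta> (twist n g) h"
  have eg: "skew_mult \<theta> e g = d"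
    unfolding e_def d_def by (simp add: skew_mult_diff_left skew_mult_assoc assms(3))
  have "e = 0"
  proof (rule ccontr)
    assume "e \<noteq> 0"
    have "coeff e 0 = 0"
      using \<open>coeff d 0 = 0\<close> coeff_skew_mult_0[of e g] g0 eg by simp
    then have "degree e \<noteq> 0"
      using \<open>e \<noteq> 0\<close> by (metis leading_coeff_0_iff)
    moreover have "degree d = degree e + degree g"
      using degree_skew_mult[OF \<open>e \<noteq> 0\<close> \<open>g \<noteq> 0\<close>] eg by simp
    ultimately show False using \<open>degree d \<le> degree g\<close> by simp
  qed
  then show ?thesis using eg unfolding d_def c_def by simp
qed

end

theorem theorem5p3:
  fixes \<theta> :: "'a::{field,finite} \<Rightarrow> 'a"
    and n :: nat and a :: 'a and f g h :: "'a poly"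
  assumes "field_aut \<theta>"
    and "a \<noteq> 0"
    and "xn_minus n a = skew_mult \<theta> h g"
  shows "skew_circulant \<theta> n a (skew_mult \<theta> f g) =
         skew_circulant \<theta> n (skew_gamma \<theta> n a g) f * skew_circulant \<theta> n a g"
proof (cases "n = 0")
  case True
  then show ?thesis by (intro eq_matI) (simp_all add: skew_circulant_def)
next
  case False
  then have n: "0 < n" by simp
  interpret skew_polynomial_ring \<theta>
    by (rule skew_polynomial_ring.intro[OF field_hom_if_field_aut[OF assms(1)]])
  define A where "A = skew_circulant \<theta> n (skew_gamma \<theta> n a g) f"
  define B where "B = skew_circulant \<theta> n a g"
  have AB: "A \<in> carrier_mat n n" "B \<in> carrier_mat n n"
    unfolding A_def B_def skew_circulant_def by auto
  have "row (skew_circulant \<theta> n a (skew_mult \<theta> f g)) i = row (A * B) i" if i: "i < n" for i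
  proof -
    have "skew_cong \<theta> n a (skew_mult \<theta> (skew_mult \<theta> (monom 1 i) f) g)
        (skew_mult \<theta> (poly_of_vec (row A i)) g)"
      unfolding row_skew_circulant[OF n i] A_def
      by (rule skew_cong_skew_mult_right[OF skew_mult_xn_minus_gamma[OF n assms(2,3)]
            vb_carrier_skew_cong(2)[OF n]])
    then show ?thesis
      using vb_skew_cong[OF n] row_skew_circulant[OF n i] row_mult[OF AB i] AB i
      by (simp add: skew_mult_assoc vb_skew_mult_poly_of_vec[OF n] B_def)
  qed
  then show ?thesis
    using AB unfolding A_def B_def by (intro eq_rowI) (simp_all add: skew_circulant_def)
qed

end
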